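(* Let $\mathrm{X},\mathrm{Y}$ be locally compact Hausdorff spaces, let $F(\mathrm{X})\subset C_0(\mathrm{X})_+$ contain sufficiently many functions to peak on compact $G_\delta$ subsets of $\mathrm{X}$, and let $T:F(\mathrm{X})\to C_0(\mathrm{Y})_+$ satisfy $\|Tf_1+\cdots+Tf_n\|=\|f_1+\cdots+f_n\|$ for all $n\in\mathbb{N}$ and $f_1,\dots,f_n\in F(\mathrm{X})$. If $x_1,x_2\in\mathrm{X}$ and $x_1\neq x_2$, then $\operatorname{psupp}_T(x_1)\cap\operatorname{psupp}_T(x_2)=\emptyset$.
   Context: $C_0(\mathrm{X})_+$: nonnegative continuous functions vanishing at infinity, sup-norm. $\operatorname{pk}(f)=\{x: f(x)=\|f\|\}$. $F(\mathrm{X})$ "contains sufficiently many functions to peak on compact $G_\delta$ subsets" if every nonempty compact $G_\delta$ set $K\subset\mathrm{X}$ equals $\operatorname{pk}(f)$ for some $f\in F(\mathrm{X})$. For $x\in\mathrm{X}$: $\operatorname{PKat}(x)=\{g\in F(\mathrm{X}): g(x)=\|g\|\}$ and $\operatorname{psupp}_T(x)=\bigcap_{h\in\operatorname{PKat}(x)}\operatorname{pk}(Th)\subset\mathrm{Y}$. *)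

theory Defs
  imports "HOL-Analysis.Analysis"
begin

definition supnorm :: "'a topology \<Rightarrow> ('a \<Rightarrow> real) \<Rightarrow> real" where
  "supnorm X f = Sup (insert 0 (f ` topspace X))"

definition C0plus :: "'a topology \<Rightarrow> ('a \<Rightarrow> real) set" where
  "C0plus X = {f. continuous_map X euclideanreal f \<and> (\<forall>x\<in>topspace X. f x \<ge> 0) \<and>
                  (\<forall>e>0. compactin X {x \<in> topspace X. f x \<ge> e})}"

definition pk :: "'a topology \<Rightarrow> ('a \<Rightarrow> real) \<Rightarrow> 'a set" where
  "pk X f = {x \<in> topspace X. f x = supnorm X f}"

definition gdelta_in :: "'a topology \<Rightarrow> 'a set \<Rightarrow> bool" where
  "gdelta_in X K \<longleftrightarrow> (\<exists>U :: nat \<Rightarrow> 'a set. (\<forall>n. openin X (U n)) \<and> K = \<Inter> (range U))"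

definition peaks_on_compact_gdelta :: "'a topology \<Rightarrow> ('a \<Rightarrow> real) set \<Rightarrow> bool" where
  "peaks_on_compact_gdelta X F \<longleftrightarrow>
     (\<forall>K. K \<noteq> {} \<and> compactin X K \<and> gdelta_in X K \<longrightarrow> (\<exists>f\<in>F. K = pk X f))"

definition PKat :: "'a topology \<Rightarrow> ('a \<Rightarrow> real) set \<Rightarrow> 'a \<Rightarrow> ('a \<Rightarrow> real) set" where
  "PKat X F x = {g \<in> F. g x = supnorm X g}"

definition psupp :: "'a topology \<Rightarrow> ('a \<Rightarrow> real) set \<Rightarrow> 'b topology
                     \<Rightarrow> (('a \<Rightarrow> real) \<Rightarrow> ('b \<Rightarrow> real)) \<Rightarrow> 'a \<Rightarrow> 'b set" where
  "psupp X F Y T x = {y \<in> topspace Y. \<forall>h \<in> PKat X F x. y \<in> pk Y (T h)}"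

end

theory Submission
  imports Defs
begin

text \<open>Separate \<open>x\<^sub>1 \<noteq> x\<^sub>2\<close> by compact \<open>G\<^sub>\<delta>\<close> neighbourhoods and pick
  \<open>f\<^sub>1, f\<^sub>2 \<in> F\<close> peaking exactly on them. Since the peak sets are disjoint and \<open>f\<^sub>1 + f\<^sub>2\<close>
  attains its norm, \<open>\<parallel>f\<^sub>1 + f\<^sub>2\<parallel> < \<parallel>f\<^sub>1\<parallel> + \<parallel>f\<^sub>2\<parallel>\<close>. A point \<open>y\<close> in both peak supports
  is a common peak point of \<open>T f\<^sub>1\<close> and \<open>T f\<^sub>2\<close>, so \<open>\<parallel>T f\<^sub>1 + T f\<^sub>2\<parallel> = \<parallel>T f\<^sub>1\<parallel> + \<parallel>T f\<^sub>2\<parallel>\<close>,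
  contradicting norm preservation for one and for two summands.\<close>

lemma compact_gdelta_neighbourhood:
  assumes "locally_compact_space X" and "Hausdorff_space X"
    and "openin X W" and "x \<in> W"
  shows "\<exists>K. x \<in> K \<and> K \<subseteq> W \<and> compactin X K \<and> gdelta_in X K"
proof -
  have "regular_space X"
    using assms locally_compact_Hausdorff_imp_regular_space by blast
  then have "neighbourhood_base_of (\<lambda>C. compactin X C \<and> closedin X C) X"
    using assms(1) locally_compact_regular_space_neighbourhood_base by blast
  then obtain U C where U: "openin X U" "x \<in> U" "U \<subseteq> C" "C \<subseteq> W" "compactin X C"
    using assms(3,4) unfolding neighbourhood_base_of by meson
  have "completely_regular_space X"
    using \<open>regular_space X\<close> assms(1) locally_compact_regular_imp_completely_regular_space by blast
  moreover have "x \<in> topspace X" "closedin X (topspace X - U)"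
    using U(1,2) openin_subset by blast+
  ultimately obtain f :: "'a \<Rightarrow> real" where f: "continuous_map X (top_of_set {0..1}) f"
      "f x = 0" "f ` (topspace X - U) \<subseteq> {1}"
    using U(2) unfolding completely_regular_space_def by blast
  have fc: "continuous_map X euclideanreal f"
    using f(1) continuous_map_in_subtopology by blast
  have f_nonneg: "f z \<ge> 0" if "z \<in> topspace X" for z
    using f(1) that continuous_map_image_subset_topspace by fastforce
  define K where "K = {z \<in> topspace X. f z \<in> {0}}"
  have "K \<subseteq> U"
    using f(3) unfolding K_def by force
  have "closedin X K"
    unfolding K_def by (rule closedin_continuous_map_preimage[OF fc]) simp
  with \<open>K \<subseteq> U\<close> U(3,5) have "compactin X K"
    by (meson closed_compactin order_trans)
  define V where "V n = {z \<in> topspace X. f z \<in> {..<1 / real (Suc n)}}" for n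
  have "K = (\<Inter>n. V n)"
  proof (intro equalityI subsetI)
    fix z assume z: "z \<in> (\<Inter>n. V n)"
    then have "z \<in> topspace X" and small: "\<And>n. f z < 1 / real (Suc n)"
      unfolding V_def by auto
    have "\<not> f z > 0"
    proof
      assume "f z > 0"
      then obtain n where "inverse (real (Suc n)) < f z"
        using reals_Archimedean by blast
      with small[of n] show False
        by (simp add: field_simps)
    qed
    with f_nonneg \<open>z \<in> topspace X\<close> show "z \<in> K"
      unfolding K_def by force
  qed (auto simp: K_def V_def)
  moreover have "openin X (V n)" for n
    unfolding V_def by (rule openin_continuous_map_preimage[OF fc]) simp
  ultimately have "gdelta_in X K"
    unfolding gdelta_in_def by blast
  moreover have "x \<in> K"
    unfolding K_def using \<open>x \<in> topspace X\<close> f(2) by simp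
  ultimately show ?thesis
    using \<open>K \<subseteq> U\<close> \<open>compactin X K\<close> U(3,4) by blast
qed

lemma peak_functions_separate_points:
  assumes "locally_compact_space X" and "Hausdorff_space X"
    and "peaks_on_compact_gdelta X F"
    and "x1 \<in> topspace X" and "x2 \<in> topspace X" and "x1 \<noteq> x2"
  obtains f1 f2 where "f1 \<in> F" "f2 \<in> F" "x1 \<in> pk X f1" "x2 \<in> pk X f2"
    "pk X f1 \<inter> pk X f2 = {}"
proof -
  obtain V1 V2 where V: "openin X V1" "openin X V2" "x1 \<in> V1" "x2 \<in> V2" "disjnt V1 V2"
    using assms(2,4-6) unfolding Hausdorff_space_def by blast
  obtain K1 where K1: "x1 \<in> K1" "K1 \<subseteq> V1" "compactin X K1" "gdelta_in X K1"
    using compact_gdelta_neighbourhood[OF assms(1,2) V(1,3)] by blast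
  obtain K2 where K2: "x2 \<in> K2" "K2 \<subseteq> V2" "compactin X K2" "gdelta_in X K2"
    using compact_gdelta_neighbourhood[OF assms(1,2) V(2,4)] by blast
  obtain f1 where f1: "f1 \<in> F" "K1 = pk X f1"
    using assms(3) K1 unfolding peaks_on_compact_gdelta_def by blast
  obtain f2 where f2: "f2 \<in> F" "K2 = pk X f2"
    using assms(3) K2 unfolding peaks_on_compact_gdelta_def by blast
  have "pk X f1 \<inter> pk X f2 \<subseteq> V1 \<inter> V2"
    using K1(2) K2(2) unfolding f1(2) f2(2) by blast
  then have "pk X f1 \<inter> pk X f2 = {}"
    using V(5) unfolding disjnt_def by blast
  then show ?thesis
    using that f1(1) f2(1) K1(1) K2(1) unfolding f1(2) f2(2) by blast
qed

lemma C0plus_bdd_above: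
  assumes "f \<in> C0plus X"
  shows "bdd_above (f ` topspace X)"
proof -
  have "continuous_map X euclideanreal f" "compactin X {x \<in> topspace X. f x \<ge> 1}"
    using assms unfolding C0plus_def by auto
  then have "compact (f ` {x \<in> topspace X. f x \<ge> 1})"
    using image_compactin by fastforce
  then have "bdd_above (f ` {x \<in> topspace X. f x \<ge> 1})"
    by (intro bounded_imp_bdd_above compact_imp_bounded)
  then obtain B where B: "\<forall>v \<in> f ` {x \<in> topspace X. f x \<ge> 1}. v \<le> B"
    unfolding bdd_above_def by blast
  have "f x \<le> max 1 B" if "x \<in> topspace X" for x
    using B that by (cases "f x \<ge> 1") auto
  then show ?thesis
    unfolding bdd_above_def by blast
qed

lemma le_supnorm:
  assumes "bdd_above (f ` topspace X)" and "x \<in> topspace X"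
  shows "f x \<le> supnorm X f"
  unfolding supnorm_def using assms by (intro cSup_upper) auto

lemma supnorm_le:
  assumes "\<And>x. x \<in> topspace X \<Longrightarrow> f x \<le> B" and "B \<ge> 0"
  shows "supnorm X f \<le> B"
  unfolding supnorm_def using assms by (intro cSup_least) auto

lemma C0plus_add:
  assumes "f \<in> C0plus X" and "g \<in> C0plus X"
  shows "(\<lambda>x. f x + g x) \<in> C0plus X"
proof -
  have cont: "continuous_map X euclideanreal (\<lambda>x. f x + g x)"
    using assms unfolding C0plus_def by (intro continuous_map_add) auto
  have fE: "\<forall>e>0. compactin X {x \<in> topspace X. f x \<ge> e}"
    and gE: "\<forall>e>0. compactin X {x \<in> topspace X. g x \<ge> e}"
    using assms unfolding C0plus_def by blast+
  have "compactin X {x \<in> topspace X. f x + g x \<ge> e}" if "e > 0" for e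
  proof (rule closed_compactin)
    have "e/2 > 0"
      using \<open>e > 0\<close> by simp
    then show "compactin X ({x \<in> topspace X. f x \<ge> e/2} \<union> {x \<in> topspace X. g x \<ge> e/2})"
      using fE gE by (blast intro: compactin_Un)
    show "{x \<in> topspace X. f x + g x \<ge> e} \<subseteq>
          {x \<in> topspace X. f x \<ge> e/2} \<union> {x \<in> topspace X. g x \<ge> e/2}"
      by auto
    show "closedin X {x \<in> topspace X. f x + g x \<ge> e}"
      using closedin_continuous_map_preimage[OF cont, of "{e..}"] by simp
  qed
  with cont assms show ?thesis
    unfolding C0plus_def by auto
qed

lemma C0plus_attains_supnorm:
  assumes "f \<in> C0plus X" and "supnorm X f > 0"
  obtains x where "x \<in> topspace X" "f x = supnorm X f"
proof -
  define s where "s = supnorm X f"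
  define C where "C = {x \<in> topspace X. f x \<ge> s/2}"
  have "s/2 > 0"
    using assms(2) unfolding s_def by simp
  then have cont: "continuous_map X euclideanreal f" and "compactin X C"
    using assms(1) unfolding C0plus_def C_def by blast+
  have "\<exists>x \<in> topspace X. s/2 < f x"
  proof (rule ccontr)
    assume "\<not> ?thesis"
    then have "s \<le> s/2"
      unfolding s_def using assms(2) by (intro supnorm_le) (auto simp: not_less)
    with assms(2) show False
      unfolding s_def by simp
  qed
  then have "f ` C \<noteq> {}"
    unfolding C_def by force
  moreover have "compact (f ` C)"
    using image_compactin[OF \<open>compactin X C\<close> cont] by simp
  ultimately obtain x0 where x0: "x0 \<in> C" "\<forall>x \<in> C. f x \<le> f x0"
    using compact_attains_sup[of "f ` C"] by blast
  have "s \<le> max (f x0) (s/2)"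
    unfolding s_def using x0 assms(2) by (intro supnorm_le) (fastforce simp: C_def s_def)+
  moreover have "f x0 \<le> s"
    using x0 le_supnorm[OF C0plus_bdd_above[OF assms(1)]] unfolding C_def s_def by blast
  ultimately show ?thesis
    using that x0(1) assms(2) unfolding C_def s_def by (auto simp: max_def split: if_splits)
qed

lemma supnorm_add_less_of_disjoint_peaks:
  assumes "f \<in> C0plus X" and "g \<in> C0plus X"
    and "x1 \<in> pk X f" and "x2 \<in> pk X g" and "pk X f \<inter> pk X g = {}"
  shows "supnorm X (\<lambda>x. f x + g x) < supnorm X f + supnorm X g"
proof -
  have x1: "x1 \<in> topspace X" "f x1 = supnorm X f"
    and x2: "x2 \<in> topspace X" "g x2 = supnorm X g"
    using assms(3,4) unfolding pk_def by auto
  have nonneg: "f x \<ge> 0" "g x \<ge> 0" if "x \<in> topspace X" for x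
    using assms(1,2) that unfolding C0plus_def by auto
  have "f x2 \<noteq> supnorm X f"
    using assms(4,5) x2(1) unfolding pk_def by blast
  moreover have "f x2 \<le> supnorm X f"
    using le_supnorm[OF C0plus_bdd_above[OF assms(1)] x2(1)] .
  ultimately have "0 < f x1 + g x1"
    using nonneg x1 x2(1) by fastforce
  also have "\<dots> \<le> supnorm X (\<lambda>x. f x + g x)"
    using le_supnorm[OF C0plus_bdd_above[OF C0plus_add[OF assms(1,2)]] x1(1)] .
  finally obtain x0 where x0: "x0 \<in> topspace X" "f x0 + g x0 = supnorm X (\<lambda>x. f x + g x)"
    using C0plus_attains_supnorm[OF C0plus_add[OF assms(1,2)]] by metis
  have "f x0 \<le> supnorm X f" "g x0 \<le> supnorm X g"
    using le_supnorm[OF C0plus_bdd_above x0(1)] assms(1,2) by blast+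
  moreover have "\<not> (f x0 = supnorm X f \<and> g x0 = supnorm X g)"
    using assms(5) x0(1) unfolding pk_def by auto
  ultimately show ?thesis
    using x0(2) by linarith
qed

lemma supnorm_add_at_common_peak:
  assumes "f \<in> C0plus Y" and "g \<in> C0plus Y"
    and "y \<in> pk Y f" and "y \<in> pk Y g"
  shows "supnorm Y (\<lambda>y. f y + g y) = supnorm Y f + supnorm Y g"
proof (rule antisym)
  have "f y = supnorm Y f" "g y = supnorm Y g" "f y \<ge> 0" "g y \<ge> 0"
    using assms unfolding pk_def C0plus_def by auto
  then show "supnorm Y (\<lambda>y. f y + g y) \<le> supnorm Y f + supnorm Y g"
    using le_supnorm[OF C0plus_bdd_above] assms(1,2)
    by (intro supnorm_le add_mono) auto
  show "supnorm Y f + supnorm Y g \<le> supnorm Y (\<lambda>y. f y + g y)"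
    using assms(3,4) le_supnorm[OF C0plus_bdd_above[OF C0plus_add[OF assms(1,2)]]]
    unfolding pk_def by force
qed

theorem mainTheorem16:
  fixes X :: "'a topology" and Y :: "'b topology"
    and F :: "('a \<Rightarrow> real) set" and T :: "('a \<Rightarrow> real) \<Rightarrow> ('b \<Rightarrow> real)"
  assumes "locally_compact_space X" and "Hausdorff_space X"
    and "locally_compact_space Y" and "Hausdorff_space Y"
    and "F \<subseteq> C0plus X"
    and "peaks_on_compact_gdelta X F"
    and "\<forall>f\<in>F. T f \<in> C0plus Y"
    and "\<And>n (fs :: nat \<Rightarrow> 'a \<Rightarrow> real). (\<forall>i<n. fs i \<in> F) \<Longrightarrow>
           supnorm Y (\<lambda>y. \<Sum>i<n. T (fs i) y) = supnorm X (\<lambda>x. \<Sum>i<n. fs i x)"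
    and "x1 \<in> topspace X" and "x2 \<in> topspace X" and "x1 \<noteq> x2"
  shows "psupp X F Y T x1 \<inter> psupp X F Y T x2 = {}"
proof (rule ccontr)
  assume "psupp X F Y T x1 \<inter> psupp X F Y T x2 \<noteq> {}"
  then obtain y where y: "y \<in> psupp X F Y T x1" "y \<in> psupp X F Y T x2"
    by blast
  obtain f1 f2 where f: "f1 \<in> F" "f2 \<in> F" "x1 \<in> pk X f1" "x2 \<in> pk X f2"
    and disjoint: "pk X f1 \<inter> pk X f2 = {}"
    using peak_functions_separate_points[OF assms(1,2,6,9-11)] by blast
  have "f1 \<in> PKat X F x1" "f2 \<in> PKat X F x2"
    using f unfolding PKat_def pk_def by auto
  then have "y \<in> pk Y (T f1)" "y \<in> pk Y (T f2)"
    using y unfolding psupp_def by auto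
  then have "supnorm Y (\<lambda>y. T f1 y + T f2 y) = supnorm Y (T f1) + supnorm Y (T f2)"
    using assms(7) f by (intro supnorm_add_at_common_peak) auto
  also have "\<dots> = supnorm X f1 + supnorm X f2"
    using assms(8)[of 1 "\<lambda>_. f1"] assms(8)[of 1 "\<lambda>_. f2"] f by simp
  also have "\<dots> > supnorm X (\<lambda>x. f1 x + f2 x)"
    using assms(5) f disjoint by (intro supnorm_add_less_of_disjoint_peaks) auto
  also have "supnorm X (\<lambda>x. f1 x + f2 x) = supnorm Y (\<lambda>y. T f1 y + T f2 y)"
    using assms(8)[of 2 "\<lambda>i. if i = 0 then f1 else f2"] f by (simp add: numeral_2_eq_2)
  finally show False
    by simp
qed

end
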